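(* Let $W$ be a nonzero restricted $\widehat{\mathfrak h}$-module satisfying condition $\mathcal C_0$. Then $\Omega_W\neq0$, i.e. $W$ contains a vacuum vector.
   Context: Let $p$ be a prime and $\mathbb{F}$ a field of characteristic $p$. Integers are viewed as elements of the prime subfield of $\mathbb{F}$. We write $\mathbb{Z}_+$ for the positive integers. <b>Heisenberg setup.</b> Let $\mathfrak h$ be a finite-dimensional $\mathbb{F}$-vector space with a non-degenerate symmetric bilinear form $\langle\cdot,\cdot\rangle$. The affine Lie algebra is $\widehat{\mathfrak h}=\mathfrak h\otimes\mathbb{F}[t,t^{-1}]\oplus\mathbb{F}\mathbf k$, where $\mathbf k$ is central and, writing $u(m)=u\otimes t^m$, $$[u(m),v(n)]=m\,\delta_{m+n,0}\langle u,v\rangle\mathbf k.$$ Set $\widehat{\mathfrak h}_+=\bigoplus_{n>0}\mathfrak h\otimes t^{-n}$ and $\widehat{\mathfrak h}_-=\bigoplus_{n>0}\mathfrak h\otimes t^{n}$. For a linear functional $\lambda\in(\widehat{\mathfrak h}_+)^*$, write $\lambda_n(u)=\lambda(u(-n))$ for $u\in\mathfrak h$, $n\in\mathbb{Z}_+$. <b>Restricted modules and vacuum vectors.</b> An $\widehat{\mathfrak h}$-module $W$ is restricted if for all $u\in\mathfrak h$ and $w\in W$ we have $u(n)w=0$ for $n\gg0$. Set $\Omega_W=\{w\in W:\widehat{\mathfrak h}_-w=0\}$; its nonzero elements are called vacuum vectors. <b>Condition $\mathcal C_0$.</b> A restricted $\widehat{\mathfrak h}$-module $W$ satisfies condition $\mathcal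 C_0$ if both of the following hold. <ol> <li>For all $u\in\mathfrak h$ and $n\in\mathbb{Z}_+$, the operators $u(np)$ and $u(n)^p$ act as $0$ on $W$.</li> <li>The operators $u(-np)$ and $u(-n)^p$ ($u\in\mathfrak h$, $n\ge0$) act semisimply and simultaneously. Precisely, $$W=\bigoplus_{(\lambda_0,\lambda)\in\mathfrak h^*\times(\widehat{\mathfrak h}_+)^*}W_{\lambda_0,\lambda},$$ where $W_{\lambda_0,\lambda}$ is the set of $w\in W$ such that: <ul> <li>$u(0)w=\lambda_0(u)w$ for all $u\in\mathfrak h$;</li> <li>$u(-m)w=\lambda_m(u)w$ for all $u\in\mathfrak h$, $m\in p\mathbb{Z}_+$;</li> <li>$u(-n)^pw=\lambda_n(u)^pw$ for all $u\in\mathfrak h$, $n\in\mathbb{Z}_+$.</li> </ul></li> </ol> *)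

theory Defs
  imports Complex_Main "HOL-Computational_Algebra.Primes"
begin

definition form_space ::
  "('f::field \<Rightarrow> 'h::ab_group_add \<Rightarrow> 'h) \<Rightarrow> ('h \<Rightarrow> 'h \<Rightarrow> 'f) \<Rightarrow> bool" where
  "form_space sH bf \<longleftrightarrow>
     vector_space sH \<and>
     (\<exists>B. finite B \<and> module.span sH B = UNIV) \<and>
     (\<forall>u. Vector_Spaces.linear sH (*) (bf u)) \<and>
     (\<forall>u v. bf u v = bf v u) \<and>
     (\<forall>u. (\<forall>v. bf u v = 0) \<longrightarrow> u = 0)"

text \<open>A module W (F-space with scalar multiplication sW) for the affine Lie algebra
 hat h: act u m is the action of u(m) = u \<otimes> t^m, kact the action of the central k.\<close>
definition affine_heis_module ::
  "('f::field \<Rightarrow> 'h::ab_group_add \<Rightarrow> 'h) \<Rightarrow> ('h \<Rightarrow> 'h \<Rightarrow> 'f) \<Rightarrow>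
   ('f \<Rightarrow> 'w::ab_group_add \<Rightarrow> 'w) \<Rightarrow> ('h \<Rightarrow> int \<Rightarrow> 'w \<Rightarrow> 'w) \<Rightarrow> ('w \<Rightarrow> 'w) \<Rightarrow> bool" where
  "affine_heis_module sH bf sW act kact \<longleftrightarrow>
     vector_space sW \<and>
     (\<forall>u m. Vector_Spaces.linear sW sW (act u m)) \<and>
     Vector_Spaces.linear sW sW kact \<and>
     (\<forall>u v m w. act (u + v) m w = act u m w + act v m w) \<and>
     (\<forall>c u m w. act (sH c u) m w = sW c (act u m w)) \<and>
     (\<forall>u v m n w. act u m (act v n w) - act v n (act u m w) =
         sW (if m + n = 0 then of_int m * bf u v else 0) (kact w)) \<and>
     (\<forall>u m w. kact (act u m w) = act u m (kact w))"

definition restricted_mod :: "('h \<Rightarrow> int \<Rightarrow> 'w \<Rightarrow> 'w::zero) \<Rightarrow> bool" where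
  "restricted_mod act \<longleftrightarrow> (\<forall>u w. \<exists>N. \<forall>n\<ge>N. act u n w = 0)"

definition vacuum_space :: "('h \<Rightarrow> int \<Rightarrow> 'w \<Rightarrow> 'w::zero) \<Rightarrow> 'w set" where
  "vacuum_space act = {w. \<forall>u n. n > 0 \<longrightarrow> act u n w = 0}"

text \<open>Weight space W_{lambda_0,lambda}; a weight is encoded as mu :: nat => h => F with
 mu 0 = lambda_0 and mu n = lambda_n (n > 0).\<close>
definition weight_space ::
  "nat \<Rightarrow> ('f \<Rightarrow> 'w \<Rightarrow> 'w) \<Rightarrow> ('h \<Rightarrow> int \<Rightarrow> 'w \<Rightarrow> 'w) \<Rightarrow> (nat \<Rightarrow> 'h \<Rightarrow> 'f::field) \<Rightarrow> 'w set" where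
  "weight_space p sW act mu = {w.
     (\<forall>u. act u 0 w = sW (mu 0 u) w) \<and>
     (\<forall>u m. m > 0 \<and> p dvd m \<longrightarrow> act u (- int m) w = sW (mu m u) w) \<and>
     (\<forall>u n. n > 0 \<longrightarrow> (act u (- int n) ^^ p) w = sW (mu n u ^ p) w)}"

definition weights :: "('f::field \<Rightarrow> 'h::ab_group_add \<Rightarrow> 'h) \<Rightarrow> (nat \<Rightarrow> 'h \<Rightarrow> 'f) set" where
  "weights sH = {mu. \<forall>n. Vector_Spaces.linear sH (*) (mu n)}"

definition condition_C0 ::
  "nat \<Rightarrow> ('f::field \<Rightarrow> 'h::ab_group_add \<Rightarrow> 'h) \<Rightarrow> ('f \<Rightarrow> 'w::ab_group_add \<Rightarrow> 'w) \<Rightarrow> ('h \<Rightarrow> int \<Rightarrow> 'w \<Rightarrow> 'w) \<Rightarrow> bool" where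
  "condition_C0 p sH sW act \<longleftrightarrow>
     (\<forall>u n w. n > 0 \<longrightarrow> act u (int (n * p)) w = 0 \<and> (act u (int n) ^^ p) w = 0) \<and>
     (\<forall>w. \<exists>S f. finite S \<and> S \<subseteq> weights sH \<and>
            (\<forall>mu\<in>S. f mu \<in> weight_space p sW act mu) \<and> w = sum f S) \<and>
     (\<forall>S f. finite S \<and> S \<subseteq> weights sH \<and>
            (\<forall>mu\<in>S. f mu \<in> weight_space p sW act mu) \<and> sum f S = 0 \<longrightarrow>
            (\<forall>mu\<in>S. f mu = 0))"

end

theory Submission
  imports Defs
begin

text \<open>By restrictedness there is an N with u(n) w = 0 for all n \<ge> N (uniformly in u, since
 h is finite-dimensional). The finitely many remaining positive modes b(n), b in a basis and
 0 < n < N, commute pairwise and are nilpotent (u(n)^p = 0 by condition C0), so they have a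
 common nonzero kernel vector obtained from w by applying them. Since positive modes commute,
 applying them preserves being killed by all modes n \<ge> N, so this vector is a vacuum vector.\<close>

lemma nilpotent_last_nonzero_iterate:
  fixes f :: "'w::zero \<Rightarrow> 'w"
  assumes "(f ^^ p) v = 0" and "v \<noteq> 0"
  obtains k where "(f ^^ k) v \<noteq> 0" and "f ((f ^^ k) v) = 0"
proof -
  have "\<exists>k. (f ^^ k) v \<noteq> 0 \<and> f ((f ^^ k) v) = 0"
  proof (rule ccontr)
    assume none: "\<not> ?thesis"
    have "(f ^^ k) v \<noteq> 0" for k
      by (induction k) (use assms(2) none in auto)
    with assms(1) show False by blast
  qed
  then show thesis using that by blast
qed

text \<open>The kernel hypothesis stands in for commutation; it holds for commuting maps that fix 0.\<close>
lemma common_kernel_vector_in_invariant_set: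
  fixes A :: "('w::zero \<Rightarrow> 'w) set"
  assumes invariant: "\<And>f x. f \<in> A \<Longrightarrow> x \<in> S \<Longrightarrow> f x \<in> S"
    and kernel_invariant: "\<And>f g x. f \<in> A \<Longrightarrow> g \<in> A \<Longrightarrow> g x = 0 \<Longrightarrow> g (f x) = 0"
    and nilpotent: "\<And>f x. f \<in> A \<Longrightarrow> (f ^^ p) x = 0"
    and "finite F" "F \<subseteq> A" "w \<in> S" "w \<noteq> 0"
  shows "\<exists>v\<in>S. v \<noteq> 0 \<and> (\<forall>f\<in>F. f v = 0)"
  using \<open>finite F\<close> \<open>F \<subseteq> A\<close>
proof (induction F rule: finite_induct)
  case empty
  then show ?case using \<open>w \<in> S\<close> \<open>w \<noteq> 0\<close> by blast
next
  case (insert f F)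
  then obtain v where v: "v \<in> S" "v \<noteq> 0" "\<forall>g\<in>F. g v = 0" by blast
  have f: "f \<in> A" using insert.prems by blast
  obtain k where k: "(f ^^ k) v \<noteq> 0" "f ((f ^^ k) v) = 0"
    using nilpotent_last_nonzero_iterate[OF nilpotent[OF f] \<open>v \<noteq> 0\<close>] .
  have "(f ^^ k) v \<in> S"
    by (induction k) (use v invariant[OF f] in auto)
  moreover have "g ((f ^^ k) v) = 0" if "g \<in> F" for g
  proof -
    have "g \<in> A" using that insert.prems by blast
    then show ?thesis
      by (induction k) (use v that kernel_invariant[OF f] in auto)
  qed
  ultimately show ?case using k by blast
qed

lemma heis_act_zero_right:
  assumes "affine_heis_module sH bf sW act kact"
  shows "act u m 0 = 0"
proof -
  have "vector_space sW" and "Vector_Spaces.linear sW sW (act u m)"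
    using assms unfolding affine_heis_module_def by blast+
  then show ?thesis
    using vector_space_pair.linear_0 vector_space_pair.intro by metis
qed

lemma heis_act_commute:
  assumes "affine_heis_module sH bf sW act kact" and "m + n \<noteq> 0"
  shows "act u m (act v n w) = act v n (act u m w)"
proof -
  interpret W: vector_space sW
    using assms(1) unfolding affine_heis_module_def by blast
  have "act u m (act v n w) - act v n (act u m w) =
        sW (if m + n = 0 then of_int m * bf u v else 0) (kact w)"
    using assms(1) unfolding affine_heis_module_def by blast
  then show ?thesis using assms(2) by simp
qed

lemma heis_act_eq_0_if_spanning_set:
  assumes "affine_heis_module sH bf sW act kact" and "vector_space sH"
    and "module.span sH B = UNIV" and "\<forall>b\<in>B. act b n v = 0"
  shows "act u n v = 0"
proof -
  interpret H: vector_space sH by fact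
  interpret W: vector_space sW
    using assms(1) unfolding affine_heis_module_def by blast
  have add: "act (x + y) n v = act x n v + act y n v"
    and scale: "act (sH c x) n v = sW c (act x n v)" for x y c
    using assms(1) unfolding affine_heis_module_def by blast+
  have "u \<in> H.span B" using assms(3) by simp
  then show ?thesis
  proof (induction rule: H.span_induct_alt)
    case base
    show ?case using add[of 0 0] by simp
  next
    case (step c b x)
    then show ?case
      using add scale assms(4) by simp
  qed
qed

lemma restricted_mod_uniform_bound:
  assumes "restricted_mod act" and "finite B"
  obtains N :: int where "N > 0" and "\<And>b n. b \<in> B \<Longrightarrow> n \<ge> N \<Longrightarrow> act b n w = 0"
proof -
  have "\<forall>b. \<exists>N. \<forall>n\<ge>N. act b n w = 0"
    using assms(1) unfolding restricted_mod_def by blast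
  then obtain Nb where Nb: "\<And>b n. n \<ge> Nb b \<Longrightarrow> act b n w = 0" by metis
  define N where "N = Max (insert 1 (Nb ` B))"
  have "1 \<le> N"
    unfolding N_def using assms(2) by (intro Max_ge) auto
  then have "N > 0" by simp
  moreover have "act b n w = 0" if "b \<in> B" "n \<ge> N" for b n
  proof -
    have "Nb b \<le> N" unfolding N_def using assms(2) that(1) by simp
    then show ?thesis using Nb that(2) by simp
  qed
  ultimately show thesis using that by blast
qed

definition positive_modes :: "('h \<Rightarrow> int \<Rightarrow> 'w \<Rightarrow> 'w) \<Rightarrow> ('w \<Rightarrow> 'w) set" where
  "positive_modes act = {act u (int n) | u n. n > 0}"

definition annihilated_from :: "('h \<Rightarrow> int \<Rightarrow> 'w \<Rightarrow> 'w::zero) \<Rightarrow> int \<Rightarrow> 'w set" where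
  "annihilated_from act N = {x. \<forall>u n. n \<ge> N \<longrightarrow> act u n x = 0}"

lemma positive_modesE:
  assumes "f \<in> positive_modes act"
  obtains u m where "f = act u m" and "m > 0"
  using assms unfolding positive_modes_def by force

lemma positive_modes_nilpotent:
  assumes "condition_C0 p sH sW act" and "f \<in> positive_modes act"
  shows "(f ^^ p) x = 0"
  using assms unfolding positive_modes_def condition_C0_def by blast

lemma positive_modes_kernel_invariant:
  assumes "affine_heis_module sH bf sW act kact"
    and "f \<in> positive_modes act" "g \<in> positive_modes act" "g x = 0"
  shows "g (f x) = 0"
proof -
  obtain u m where f: "f = act u m" "m > 0" using assms(2) by (rule positive_modesE)
  obtain v n where g: "g = act v n" "n > 0" using assms(3) by (rule positive_modesE)
  have "g (f x) = f (g x)"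
    using heis_act_commute[OF assms(1)] f g by simp
  then show ?thesis
    using assms(4) heis_act_zero_right[OF assms(1)] f(1) by simp
qed

lemma annihilated_from_closed_positive_modes:
  assumes "affine_heis_module sH bf sW act kact" and "N > 0"
    and "f \<in> positive_modes act" "x \<in> annihilated_from act N"
  shows "f x \<in> annihilated_from act N"
proof -
  obtain v m where f: "f = act v m" "m > 0" using assms(3) by (rule positive_modesE)
  have "act u n (act v m x) = 0" if "n \<ge> N" for u n
  proof -
    have "act u n (act v m x) = act v m (act u n x)"
      using heis_act_commute[OF assms(1)] f(2) assms(2) that by simp
    also have "\<dots> = 0"
      using assms(4) that heis_act_zero_right[OF assms(1)]
      unfolding annihilated_from_def by simp
    finally show ?thesis .
  qed
  then show ?thesis unfolding annihilated_from_def f(1) by blast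
qed

lemma low_modes_subset_positive_modes:
  "(\<lambda>(b, n). act b n) ` (B \<times> {1..<N}) \<subseteq> positive_modes act"
proof
  fix f assume "f \<in> (\<lambda>(b, n). act b n) ` (B \<times> {1..<N})"
  then obtain b n where "f = act b n" "n \<ge> 1" by auto
  then have "f = act b (int (nat n)) \<and> nat n > 0" by simp
  then show "f \<in> positive_modes act" unfolding positive_modes_def by blast
qed

lemma vacuum_if_annihilated_by_low_basis_modes:
  assumes "affine_heis_module sH bf sW act kact" and "vector_space sH"
    and "module.span sH B = UNIV" and "x \<in> annihilated_from act N"
    and "\<forall>f \<in> (\<lambda>(b, n). act b n) ` (B \<times> {1..<N}). f x = 0"
  shows "x \<in> vacuum_space act"
proof -
  have "act u n x = 0" if "n > 0" for u n
  proof (cases "n \<ge> N")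
    case True
    then show ?thesis using assms(4) unfolding annihilated_from_def by blast
  next
    case False
    then have "\<forall>b\<in>B. act b n x = 0" using assms(5) that by force
    then show ?thesis by (rule heis_act_eq_0_if_spanning_set[OF assms(1-3)])
  qed
  then show ?thesis unfolding vacuum_space_def by blast
qed

theorem lemma4:
  fixes p :: nat
    and sH :: "'f::field \<Rightarrow> 'h::ab_group_add \<Rightarrow> 'h"
    and bf :: "'h \<Rightarrow> 'h \<Rightarrow> 'f"
    and sW :: "'f \<Rightarrow> 'w::ab_group_add \<Rightarrow> 'w"
    and act :: "'h \<Rightarrow> int \<Rightarrow> 'w \<Rightarrow> 'w"
    and kact :: "'w \<Rightarrow> 'w"
  assumes "prime p" and "CHAR('f) = p"
    and "form_space sH bf"
    and "affine_heis_module sH bf sW act kact"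
    and "restricted_mod act"
    and "condition_C0 p sH sW act"
    and "\<exists>w::'w. w \<noteq> 0"
  shows "\<exists>w \<in> vacuum_space act. w \<noteq> 0"
proof -
  note heis = assms(4)
  have "vector_space sH" and "\<exists>B. finite B \<and> module.span sH B = UNIV"
    using assms(3) unfolding form_space_def by blast+
  then obtain B where "finite B" and span_B: "module.span sH B = UNIV" by blast
  obtain w :: 'w where "w \<noteq> 0" using assms(7) by blast
  obtain N where "N > 0" and N: "\<And>b n. b \<in> B \<Longrightarrow> n \<ge> N \<Longrightarrow> act b n w = 0"
    using restricted_mod_uniform_bound[OF assms(5) \<open>finite B\<close>] by blast
  have "w \<in> annihilated_from act N"
    unfolding annihilated_from_def
    using N heis_act_eq_0_if_spanning_set[OF heis \<open>vector_space sH\<close> span_B] by blast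
  have "\<exists>v \<in> annihilated_from act N. v \<noteq> 0 \<and>
      (\<forall>f \<in> (\<lambda>(b, n). act b n) ` (B \<times> {1..<N}). f v = 0)"
  proof (rule common_kernel_vector_in_invariant_set[of "positive_modes act"])
    show "f x \<in> annihilated_from act N"
      if "f \<in> positive_modes act" "x \<in> annihilated_from act N" for f x
      using annihilated_from_closed_positive_modes[OF heis \<open>N > 0\<close> that] .
    show "g (f x) = 0"
      if "f \<in> positive_modes act" "g \<in> positive_modes act" "g x = 0" for f g x
      using positive_modes_kernel_invariant[OF heis that] .
    show "(f ^^ p) x = 0" if "f \<in> positive_modes act" for f x
      using positive_modes_nilpotent[OF assms(6) that] .
  qed (use \<open>finite B\<close> \<open>w \<noteq> 0\<close> \<open>w \<in> annihilated_from act N\<close>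
      low_modes_subset_positive_modes in simp_all)
  then show ?thesis
    using vacuum_if_annihilated_by_low_basis_modes[OF heis \<open>vector_space sH\<close> span_B] by blast
qed

end
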